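(* Let $q\in(0,1)$, let $(R_n(x;q))_{n\in\mathbb{N}_0}$ be the little $q$-Legendre polynomials, and for $x\in\mathbb{R}$ let $\alpha_x(m)=R_m(x;q)$ ($m\in\mathbb{N}_0$). Let $K:=\left\lceil\frac{\log4}{\log\frac{1}{q}}-1\right\rceil$. Then $\alpha_{1-q^n}(n+k)\neq0$ and \[\left|\frac{\alpha_{1-q^n}(n+k+1)}{\alpha_{1-q^n}(n+k)q^{k+1}}\right|<4\] for all $n\in\mathbb{N}_0$ and all $k\in\mathbb{N}_0$ with $k\ge K$. For every $n\in\mathbb{N}_0$, the sequence $(\alpha_{1-q^n}(n+k))_{k\ge K}$ oscillates around its limit $0$, i.e. $\frac{\alpha_{1-q^n}(n+k+1)}{\alpha_{1-q^n}(n+k)}<0$ for all $k\ge K$, and the sequence $(|\alpha_{1-q^n}(n+k)|)_{k\ge K}$ is strictly decreasing. Moreover, \[|\alpha_{1-q^n}(n+K+k)|\le4^kq^{\frac{(2K+k+1)k}{2}}|\alpha_{1-q^n}(n+K)|\le4^kq^{\frac{(2K+k+1)k}{2}}\] for all $n,k\in\mathbb{N}_0$.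
   Context: For $q\in(0,1)$, the little $q$-Legendre polynomials are defined by $R_0(x;q)=1$, $R_1(x;q)=(x-b_0)/a_0$ and $R_1(x;q)R_n(x;q)=a_nR_{n+1}(x;q)+b_nR_n(x;q)+c_nR_{n-1}(x;q)$ for $n\ge1$, where $a_0=\frac{1}{q+1}$, $b_0=\frac{q}{q+1}$, and for $n\ge1$: $a_n=q^n\frac{(1+q)(1-q^{n+1})}{(1-q^{2n+1})(1+q^{n+1})}$, $c_n=q^n\frac{(1+q)(1-q^n)}{(1-q^{2n+1})(1+q^n)}$, $b_n=1-a_n-c_n=\frac{(1-q^n)(1-q^{n+1})}{(1+q^n)(1+q^{n+1})}$. They are normalized by $R_n(1;q)=1$. *)

theory Defs
  imports Complex_Main
begin

definition lqa :: "real \<Rightarrow> nat \<Rightarrow> real" where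
  "lqa q n = (if n = 0 then 1 / (q + 1)
     else q ^ n * ((1 + q) * (1 - q ^ (n + 1))) / ((1 - q ^ (2 * n + 1)) * (1 + q ^ (n + 1))))"

definition lqc :: "real \<Rightarrow> nat \<Rightarrow> real" where
  "lqc q n = (if n = 0 then 0
     else q ^ n * ((1 + q) * (1 - q ^ n)) / ((1 - q ^ (2 * n + 1)) * (1 + q ^ n)))"

definition lqb :: "real \<Rightarrow> nat \<Rightarrow> real" where
  "lqb q n = (if n = 0 then q / (q + 1) else 1 - lqa q n - lqc q n)"

text \<open>Pairs (R_n, R_{n+1}) of little q-Legendre polynomials evaluated at x.\<close>
fun lqL_pair :: "real \<Rightarrow> real \<Rightarrow> nat \<Rightarrow> real \<times> real" where
  "lqL_pair q x 0 = (1, (x - lqb q 0) / lqa q 0)"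
| "lqL_pair q x (Suc n) =
    (let (r0, r1) = lqL_pair q x n;
         R1 = (x - lqb q 0) / lqa q 0
     in (r1, ((R1 - lqb q (Suc n)) * r1 - lqc q (Suc n) * r0) / lqa q (Suc n)))"

definition littleqLegendre :: "real \<Rightarrow> nat \<Rightarrow> real \<Rightarrow> real" where
  "littleqLegendre q n x = fst (lqL_pair q x n)"

end

theory Submission
  imports Defs
begin

text \<open>
  With \<open>w = q (1 - x)\<close>, \<open>R\<^sub>m(x)\<close> is a terminating basic hypergeometric series in \<open>w\<close>.
  Its coefficients satisfy a q-difference equation in \<open>w\<close>, which at the points
  \<open>x = 1 - q ^ j\<close> becomes a second three-term recurrence, in \<open>j\<close> instead of \<open>m\<close>.
  Writing \<open>\<alpha> (1 - q ^ n) (n + k) = (-1) ^ k q ^ (k (k + 1) / 2) S(n, k)\<close>, this dual recurrence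
  becomes a recurrence for \<open>S\<close> with \<open>S(0, k) = 1\<close>. As long as \<open>q ^ (k + 1) \<le> 1 / 4\<close>,
  i.e. \<open>k \<ge> K\<close>, induction on \<open>n\<close> shows \<open>S(n, k) > 0\<close> and that the ratios
  \<open>(1 - q ^ n) S(n, k) / S(n - 1, k + 1)\<close> lie in \<open>(1/4, 1]\<close> and decrease in \<open>n\<close>;
  telescoping gives \<open>S(n, k + 1) < 4 S(n, k)\<close>, whence the sign alternation, the ratio
  bound and the geometric decay.

  For \<open>\<bar>\<alpha> (1 - q ^ n) (n + K)\<bar> \<le> 1\<close>, summation by parts of the dual recurrence shows that the
  \<open>R\<^sub>m\<close> are orthogonal for the weights \<open>q ^ j\<close> at the points \<open>1 - q ^ j\<close>, with norms
  \<open>q ^ m / (1 - q ^ (2 m + 1))\<close>; Bessel's inequality for the point mass at \<open>1 - q ^ n\<close>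
  then bounds \<open>R\<^sub>n\<^sub>+\<^sub>K(1 - q ^ n)\<^sup>2\<close> by \<open>q ^ K (1 - (1 - q) q ^ n) / (1 - q ^ (2 n + 2 K + 1)) \<le> 1\<close>.
\<close>

section \<open>The explicit hypergeometric form\<close>

definition qpoch :: "real \<Rightarrow> real \<Rightarrow> nat \<Rightarrow> real" where
  "qpoch q a j = (\<Prod>i<j. 1 - a * q ^ i)"

lemma qpoch_0 [simp]: "qpoch q a 0 = 1"
  by (simp add: qpoch_def)

lemma qpoch_Suc: "qpoch q a (Suc j) = qpoch q a j * (1 - a * q ^ j)"
  by (simp add: qpoch_def)

lemma qpoch_Suc_shift: "qpoch q a (Suc j) = (1 - a) * qpoch q (a * q) j"
proof (induction j)
  case (Suc j)
  then show ?case
    by (simp add: qpoch_Suc[of q a "Suc j"] qpoch_Suc[of q "a * q"] mult.assoc)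
qed (simp add: qpoch_def)

lemma qpoch_Suc_Suc_shift: "qpoch q a (Suc (Suc j)) = (1 - a) * (1 - a * q) * qpoch q (a * q * q) j"
  by (simp add: qpoch_Suc_shift[of q a] qpoch_Suc_shift[of q "a * q"])

lemma qpoch_eq_0: "0 < q \<Longrightarrow> m < j \<Longrightarrow> qpoch q (1 / q ^ m) j = 0"
  unfolding qpoch_def by (rule prod_zero) (auto intro!: bexI[of _ m])

text \<open>In the hypergeometric form the coefficients \<open>c(m + 1, j)\<close>, \<open>c(m, j)\<close>, \<open>c(m - 1, j)\<close>
  and \<open>c(m, j - 1)\<close> share a common factor \<open>Z\<close>; with \<open>A = q ^ m\<close> and \<open>t = q ^ (j - 2)\<close>
  the contiguous relation behind the three-term recurrence becomes a polynomial identity.\<close>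

lemma contiguous_relation_factored:
  fixes q A t a c Z C1 C2 C3 C4 :: real
  assumes "q \<noteq> 0" "A \<noteq> 0" "(1 - q * A\<^sup>2) * (1 + q * A) * (1 + A) \<noteq> 0"
    and a: "a * ((1 - q * A\<^sup>2) * (1 + q * A)) = A * (1 + q) * (1 - q * A)"
    and c: "c * ((1 - q * A\<^sup>2) * (1 + A)) = A * (1 + q) * (1 - A)"
    and C1: "C1 = (1 - 1 / (A * q)) * (1 - 1 / A) * (1 - A * q\<^sup>2 * t) * (1 - A * q ^ 3 * t) * Z"
    and C2: "C2 = (1 - 1 / A) * (1 - q * t / A) * (1 - A * q) * (1 - A * q\<^sup>2 * t) * Z"
    and C3: "C3 = (1 - q * t / A) * (1 - q\<^sup>2 * t / A) * (1 - A) * (1 - A * q) * Z"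
    and C4: "C4 = (1 - 1 / A) * (1 - A * q) * (1 - q\<^sup>2 * t)\<^sup>2 * Z"
  shows "a * C1 = (a + c) * C2 - c * C3 - (1 + q) / q * C4"
proof -
  let ?E = "a * ((1 - 1 / (A * q)) * (1 - 1 / A) * (1 - A * q\<^sup>2 * t) * (1 - A * q ^ 3 * t))
       - (a + c) * ((1 - 1 / A) * (1 - q * t / A) * (1 - A * q) * (1 - A * q\<^sup>2 * t))
       + c * ((1 - q * t / A) * (1 - q\<^sup>2 * t / A) * (1 - A) * (1 - A * q))
       + (1 + q) / q * ((1 - 1 / A) * (1 - A * q) * (1 - q\<^sup>2 * t)\<^sup>2)"
  have "A\<^sup>2 * q * ?E = a * (q * A - 1) * (A - 1) * (1 - A * q\<^sup>2 * t) * (1 - A * q ^ 3 * t)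
     - (a + c) * q * (A - 1) * (A - q * t) * (1 - A * q) * (1 - A * q\<^sup>2 * t)
     + c * q * (A - q * t) * (A - q\<^sup>2 * t) * (1 - A) * (1 - A * q)
     + (1 + q) * A * (A - 1) * (1 - A * q) * (1 - q\<^sup>2 * t)\<^sup>2"
    using assms(1,2) by (simp add: field_simps power2_eq_square)
  also have "((1 - q * A\<^sup>2) * (1 + q * A) * (1 + A)) * \<dots> = 0"
    using a c by algebra
  finally have "?E = 0"
    using assms(1-3) by simp
  moreover have "a * C1 - ((a + c) * C2 - c * C3 - (1 + q) / q * C4) = Z * ?E"
    unfolding C1 C2 C3 C4 by (simp add: algebra_simps)
  ultimately show ?thesis
    by simp
qed

locale little_q_Legendre =
  fixes q :: real
  assumes q_pos: "0 < q" and q_less_1: "q < 1"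
begin

lemma q_power_pos [simp]: "0 < q ^ n"
  using q_pos by simp

lemma q_power_Suc_less_1: "q ^ Suc n < 1"
  using power_Suc_less_one q_pos q_less_1 by blast

lemma q_mult_power_less_1 [simp]: "q * q ^ n < 1"
  using q_power_Suc_less_1 by simp

lemma q_power_le_1 [simp]: "q ^ n \<le> 1"
  using q_pos q_less_1 by (simp add: power_le_one)

lemma q_power_less_1_iff [simp]: "q ^ n < 1 \<longleftrightarrow> 0 < n"
  using power_less_one_iff[of q n] q_pos q_less_1 by simp

lemma qpoch_q_pos: "0 < qpoch q q j"
  unfolding qpoch_def by (intro prod_pos) (simp add: mult.commute)

lemma lqa_pos: "0 < lqa q m"
  using q_pos by (simp add: lqa_def add_pos_pos)

lemma power_2m1_eq: "q ^ (2 * m + 1) = q * (q ^ m)\<^sup>2"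
  by (simp add: power_mult power_add mult.commute power2_eq_square)

lemma lqa_cleared:
  assumes "1 \<le> m"
  shows "lqa q m * ((1 - q * (q ^ m)\<^sup>2) * (1 + q * q ^ m)) = q ^ m * (1 + q) * (1 - q * q ^ m)"
proof -
  have "q * (q ^ m)\<^sup>2 < 1"
    using q_power_less_1_iff[of "2 * m + 1"] unfolding power_2m1_eq by simp
  moreover have "0 < 1 + q * q ^ m"
    using q_pos by (simp add: add_pos_pos)
  ultimately show ?thesis
    using assms unfolding lqa_def power_2m1_eq by simp
qed

lemma lqc_cleared:
  assumes "1 \<le> m"
  shows "lqc q m * ((1 - q * (q ^ m)\<^sup>2) * (1 + q ^ m)) = q ^ m * (1 + q) * (1 - q ^ m)"
proof -
  have "q * (q ^ m)\<^sup>2 < 1"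
    using q_power_less_1_iff[of "2 * m + 1"] unfolding power_2m1_eq by simp
  moreover have "0 < 1 + q ^ m"
    using q_pos by (simp add: add_pos_pos)
  ultimately show ?thesis
    using assms unfolding lqc_def power_2m1_eq by simp
qed

text \<open>The coefficients of the terminating basic hypergeometric series
  \<open>\<^sub>2\<phi>\<^sub>1(q\<^sup>-\<^sup>m, q\<^sup>m\<^sup>+\<^sup>1; q; q, w)\<close>, which is \<open>R\<^sub>m(x)\<close> at \<open>w = q (1 - x)\<close>.\<close>

definition lqL_coeff :: "nat \<Rightarrow> nat \<Rightarrow> real" where
  "lqL_coeff m j = qpoch q (1 / q ^ m) j * qpoch q (q ^ (m + 1)) j / (qpoch q q j)\<^sup>2"

lemma lqL_coeff_0 [simp]: "lqL_coeff m 0 = 1"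
  by (simp add: lqL_coeff_def)

lemma lqL_coeff_eq_0: "m < j \<Longrightarrow> lqL_coeff m j = 0"
  using q_pos by (simp add: lqL_coeff_def qpoch_eq_0)

lemma lqL_coeff_factored_1:
  assumes m: "1 \<le> m"
  defines "A \<equiv> q ^ m" and "t \<equiv> 1 / q"
  obtains Z where
    "lqL_coeff (m + 1) 1 = (1 - 1 / (A * q)) * (1 - 1 / A) * (1 - A * q\<^sup>2 * t) * (1 - A * q ^ 3 * t) * Z"
    "lqL_coeff m 1 = (1 - 1 / A) * (1 - q * t / A) * (1 - A * q) * (1 - A * q\<^sup>2 * t) * Z"
    "lqL_coeff (m - 1) 1 = (1 - q * t / A) * (1 - q\<^sup>2 * t / A) * (1 - A) * (1 - A * q) * Z"
    "lqL_coeff m 0 = (1 - 1 / A) * (1 - A * q) * (1 - q\<^sup>2 * t)\<^sup>2 * Z"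
proof -
  have powers: "1 / q ^ (m + 1) = 1 / (A * q)" "1 / q ^ m = 1 / A" "1 / q ^ (m - 1) = q / A"
      "q ^ (m + 1) = A * q" "q ^ (m + 1 + 1) = A * q * q" "q ^ (m - 1 + 1) = A"
    using m q_pos unfolding A_def by (simp_all add: power_diff)
  have "lqL_coeff (m + 1) 1 = (1 - 1 / (A * q)) * (1 - A * q * q) / (1 - q)\<^sup>2"
       "lqL_coeff m 1 = (1 - 1 / A) * (1 - A * q) / (1 - q)\<^sup>2"
       "lqL_coeff (m - 1) 1 = (1 - q / A) * (1 - A) / (1 - q)\<^sup>2"
    unfolding lqL_coeff_def powers by (simp_all add: qpoch_def)
  moreover have "A < 1" "A * q < 1" "0 < A"
    using m unfolding A_def by (simp_all add: mult.commute)
  then have "A - 1 \<noteq> 0" "1 - A * q \<noteq> 0" "1 - q \<noteq> 0" "A \<noteq> 0" "q \<noteq> 0"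
    using q_pos q_less_1 by auto
  ultimately show thesis
    by (intro that[of "1 / ((1 - 1 / A) * (1 - A * q) * (1 - q)\<^sup>2)"])
      (simp_all add: t_def divide_simps power2_eq_square power3_eq_cube, algebra+)
qed

lemma lqL_coeff_factored_Suc_Suc:
  fixes i :: nat
  assumes m: "1 \<le> m"
  defines "A \<equiv> q ^ m" and "t \<equiv> q ^ i"
  obtains Z where
    "lqL_coeff (m + 1) (i + 2) = (1 - 1 / (A * q)) * (1 - 1 / A) * (1 - A * q\<^sup>2 * t) * (1 - A * q ^ 3 * t) * Z"
    "lqL_coeff m (i + 2) = (1 - 1 / A) * (1 - q * t / A) * (1 - A * q) * (1 - A * q\<^sup>2 * t) * Z"
    "lqL_coeff (m - 1) (i + 2) = (1 - q * t / A) * (1 - q\<^sup>2 * t / A) * (1 - A) * (1 - A * q) * Z"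
    "lqL_coeff m (i + 1) = (1 - 1 / A) * (1 - A * q) * (1 - q\<^sup>2 * t)\<^sup>2 * Z"
proof -
  define U where "U = qpoch q (q / A) i"
  define V where "V = qpoch q (A * q * q) i"
  define W where "W = qpoch q q (i + 1)"
  have powers: "1 / q ^ (m + 1) = 1 / (A * q)" "1 / q ^ m = 1 / A" "1 / q ^ (m - 1) = q / A"
      "q ^ (m + 1) = A * q" "q ^ (m + 1 + 1) = A * q * q" "q ^ (m - 1 + 1) = A"
    using m q_pos unfolding A_def by (simp_all add: power_diff)
  have nonzero: "W \<noteq> 0" "1 - q\<^sup>2 * t \<noteq> 0"
    using qpoch_q_pos[of "i + 1"] q_power_Suc_less_1[of "Suc i"] unfolding W_def t_def
    by (simp_all add: power2_eq_square)
  have U_expansions: "qpoch q (1 / (A * q)) (i + 2) = (1 - 1 / (A * q)) * (1 - 1 / A) * U"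
       "qpoch q (1 / A) (i + 2) = (1 - 1 / A) * U * (1 - q * t / A)"
       "qpoch q (q / A) (i + 2) = U * (1 - q * t / A) * (1 - q\<^sup>2 * t / A)"
       "qpoch q (1 / A) (i + 1) = (1 - 1 / A) * U"
    using qpoch_Suc_Suc_shift[of q "1 / (A * q)" i] qpoch_Suc_shift[of q "1 / A" "Suc i"]
      qpoch_Suc_shift[of q "1 / A" i] q_pos
    unfolding U_def t_def by (simp_all add: qpoch_Suc power2_eq_square mult_ac)
  have V_expansions: "qpoch q (A * q * q) (i + 2) = V * (1 - A * q\<^sup>2 * t) * (1 - A * q ^ 3 * t)"
       "qpoch q (A * q) (i + 2) = (1 - A * q) * V * (1 - A * q\<^sup>2 * t)"
       "qpoch q A (i + 2) = (1 - A) * (1 - A * q) * V"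
       "qpoch q (A * q) (i + 1) = (1 - A * q) * V"
    using qpoch_Suc_shift[of q "A * q" "Suc i"] qpoch_Suc_Suc_shift[of q A i] qpoch_Suc_shift[of q "A * q" i]
    unfolding V_def t_def by (simp_all add: qpoch_Suc power2_eq_square power3_eq_cube mult_ac)
  have W_expansions: "qpoch q q (i + 2) = W * (1 - q\<^sup>2 * t)" "qpoch q q (i + 1) = W"
    unfolding W_def t_def by (simp_all add: qpoch_Suc[of q q "Suc i"] power2_eq_square mult_ac)
  show thesis
    by (rule that[of "U * V / (W\<^sup>2 * (1 - q\<^sup>2 * t)\<^sup>2)"];
        unfold lqL_coeff_def powers U_expansions V_expansions W_expansions)
      (use nonzero in \<open>simp_all add: power_mult_distrib mult_ac\<close>)
qed

lemma lqL_coeff_contiguous: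
  assumes m: "1 \<le> m" and j: "1 \<le> j"
  shows "lqa q m * lqL_coeff (m + 1) j = (lqa q m + lqc q m) * lqL_coeff m j
           - lqc q m * lqL_coeff (m - 1) j - (1 + q) / q * lqL_coeff m (j - 1)"
proof -
  define A where "A = q ^ m"
  have "q * A\<^sup>2 < 1" "0 < q * A" "0 < A"
    using q_power_less_1_iff[of "2 * m + 1"] q_pos unfolding A_def power_2m1_eq by simp_all
  then have "(1 - q * A\<^sup>2) * (1 + q * A) * (1 + A) \<noteq> 0"
    by simp
  moreover have "q \<noteq> 0" "A \<noteq> 0"
    using q_pos \<open>0 < A\<close> by simp_all
  ultimately have relation: "C1 = (1 - 1 / (A * q)) * (1 - 1 / A) * (1 - A * q\<^sup>2 * t) * (1 - A * q ^ 3 * t) * Z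
    \<Longrightarrow> C2 = (1 - 1 / A) * (1 - q * t / A) * (1 - A * q) * (1 - A * q\<^sup>2 * t) * Z
    \<Longrightarrow> C3 = (1 - q * t / A) * (1 - q\<^sup>2 * t / A) * (1 - A) * (1 - A * q) * Z
    \<Longrightarrow> C4 = (1 - 1 / A) * (1 - A * q) * (1 - q\<^sup>2 * t)\<^sup>2 * Z
    \<Longrightarrow> lqa q m * C1 = (lqa q m + lqc q m) * C2 - lqc q m * C3 - (1 + q) / q * C4" for t Z C1 C2 C3 C4
    using contiguous_relation_factored lqa_cleared[OF m, folded A_def] lqc_cleared[OF m, folded A_def]
    by blast
  show ?thesis
  proof (cases "j = 1")
    case True
    have "lqa q m * lqL_coeff (m + 1) 1 = (lqa q m + lqc q m) * lqL_coeff m 1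
        - lqc q m * lqL_coeff (m - 1) 1 - (1 + q) / q * lqL_coeff m 0"
      by (rule lqL_coeff_factored_1[OF m]) (rule relation[unfolded A_def])
    with True show ?thesis
      by simp
  next
    case False
    with j obtain i where "j = i + 2"
      by (metis add_2_eq_Suc' le_Suc_ex le_antisym not_less_eq_eq numeral_2_eq_2 plus_1_eq_Suc)
    moreover have "lqa q m * lqL_coeff (m + 1) (i + 2) = (lqa q m + lqc q m) * lqL_coeff m (i + 2)
        - lqc q m * lqL_coeff (m - 1) (i + 2) - (1 + q) / q * lqL_coeff m (i + 1)"
      by (rule lqL_coeff_factored_Suc_Suc[OF m]) (rule relation[unfolded A_def])
    ultimately show ?thesis
      by simp
  qed
qed

definition lqL_poly :: "nat \<Rightarrow> real \<Rightarrow> real" where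
  "lqL_poly m w = (\<Sum>j\<le>m. lqL_coeff m j * w ^ j)"

lemma lqL_poly_eq_sum: "m \<le> M \<Longrightarrow> lqL_poly m w = (\<Sum>j\<le>M. lqL_coeff m j * w ^ j)"
  unfolding lqL_poly_def by (intro sum.mono_neutral_left) (auto simp: lqL_coeff_eq_0)

lemma lqL_poly_0 [simp]: "lqL_poly 0 w = 1"
  by (simp add: lqL_poly_def)

lemma lqL_poly_at_0 [simp]: "lqL_poly m 0 = 1"
  unfolding lqL_poly_def by (subst sum.atMost_shift) simp

lemma lqL_poly_1: "lqL_poly 1 w = 1 - (1 + q) / q * w"
proof -
  have "(1 - 1 / q) * (1 - q * q) = - ((1 + q) / q) * (1 - q)\<^sup>2"
    using q_pos by (simp add: field_simps power2_eq_square)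
  then have "lqL_coeff 1 1 = - ((1 + q) / q)"
    using q_less_1 by (simp add: lqL_coeff_def qpoch_def)
  then show ?thesis
    by (simp add: lqL_poly_def)
qed

lemma lqL_poly_shift: "(\<Sum>j\<le>m + 1. (if j = 0 then 0 else lqL_coeff m (j - 1)) * w ^ j) = w * lqL_poly m w"
  by (simp add: sum.atMost_Suc_shift lqL_poly_def sum_distrib_left mult_ac del: sum.atMost_Suc)

lemma lqL_poly_recurrence:
  assumes m: "1 \<le> m"
  shows "lqa q m * lqL_poly (m + 1) w = (lqa q m + lqc q m) * lqL_poly m w
           - lqc q m * lqL_poly (m - 1) w - (1 + q) / q * w * lqL_poly m w"
proof -
  let ?a = "lqa q m" and ?c = "lqc q m"
  let ?shifted = "\<lambda>j. if j = 0 then 0 else lqL_coeff m (j - 1)"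
  have contiguous: "?a * lqL_coeff (m + 1) j
      = (?a + ?c) * lqL_coeff m j - ?c * lqL_coeff (m - 1) j - (1 + q) / q * ?shifted j" for j
    using lqL_coeff_contiguous[OF m, of j] by (cases j) (simp_all add: algebra_simps)
  have "?a * lqL_poly (m + 1) w = (\<Sum>j\<le>m + 1. (?a * lqL_coeff (m + 1) j) * w ^ j)"
    unfolding lqL_poly_def sum_distrib_left by (simp only: mult.assoc)
  also have "\<dots> = (\<Sum>j\<le>m + 1. ((?a + ?c) * lqL_coeff m j - ?c * lqL_coeff (m - 1) j
      - (1 + q) / q * ?shifted j) * w ^ j)"
    by (simp only: contiguous)
  also have "\<dots> = (?a + ?c) * (\<Sum>j\<le>m + 1. lqL_coeff m j * w ^ j)
      - ?c * (\<Sum>j\<le>m + 1. lqL_coeff (m - 1) j * w ^ j) - (1 + q) / q * (\<Sum>j\<le>m + 1. ?shifted j * w ^ j)"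
    by (simp only: sum_subtractf sum_distrib_left left_diff_distrib mult.assoc)
  also have "\<dots> = (?a + ?c) * lqL_poly m w - ?c * lqL_poly (m - 1) w - (1 + q) / q * w * lqL_poly m w"
    unfolding lqL_poly_shift using lqL_poly_eq_sum[of m "m + 1" w] lqL_poly_eq_sum[of "m - 1" "m + 1" w]
    by simp
  finally show ?thesis .
qed

lemma lqL_pair_eq_poly: "lqL_pair q x n = (lqL_poly n (q * (1 - x)), lqL_poly (n + 1) (q * (1 - x)))"
proof (induction n)
  case 0
  have "(x - lqb q 0) / lqa q 0 = 1 - (1 + q) / q * (q * (1 - x))"
    using q_pos by (simp add: lqa_def lqb_def field_simps)
  then show ?case
    using q_pos lqL_poly_1 by simp
next
  case (Suc n)
  let ?w = "q * (1 - x)"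
  have "(x - lqb q 0) / lqa q 0 = 1 - (1 + q) / q * ?w"
    using q_pos by (simp add: lqa_def lqb_def field_simps)
  moreover have "lqL_poly (Suc n + 1) ?w
      = ((1 - (1 + q) / q * ?w - lqb q (Suc n)) * lqL_poly (Suc n) ?w - lqc q (Suc n) * lqL_poly n ?w)
        / lqa q (Suc n)"
    using lqL_poly_recurrence[of "Suc n" ?w] lqa_pos[of "Suc n"]
    by (simp add: lqb_def field_simps)
  ultimately show ?case
    using Suc.IH by (simp add: Let_def)
qed

lemma littleqLegendre_eq_poly: "littleqLegendre q n x = lqL_poly n (q * (1 - x))"
  by (simp add: littleqLegendre_def lqL_pair_eq_poly)

section \<open>The dual recurrence and orthogonality on the points \<open>1 - q ^ j\<close>\<close>

definition lqL_eigenvalue :: "nat \<Rightarrow> real" where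
  "lqL_eigenvalue m = 1 / q ^ m + q ^ (m + 1)"

lemma lqL_coeff_Suc:
  "(1 - q ^ (j + 1))\<^sup>2 * lqL_coeff m (j + 1) = (1 - lqL_eigenvalue m * q ^ j + q ^ (2 * j + 1)) * lqL_coeff m j"
proof -
  have "(1 - 1 / q ^ m * q ^ j) * (1 - q ^ (m + 1) * q ^ j) = 1 - lqL_eigenvalue m * q ^ j + q ^ (2 * j + 1)"
    unfolding lqL_eigenvalue_def using q_pos by (simp add: field_simps power_add power_mult power2_eq_square)
  moreover have "1 - q * q ^ j \<noteq> 0"
    using q_mult_power_less_1[of j] by linarith
  moreover have "lqL_coeff m (j + 1)
      = lqL_coeff m j * ((1 - 1 / q ^ m * q ^ j) * (1 - q ^ (m + 1) * q ^ j)) / (1 - q * q ^ j)\<^sup>2"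
    unfolding lqL_coeff_def using qpoch_q_pos[of j] \<open>1 - q * q ^ j \<noteq> 0\<close>
    by (simp add: qpoch_Suc field_simps power2_eq_square)
  ultimately show ?thesis
    by simp
qed

lemma lqL_poly_q_difference:
  "lqL_poly m w - 2 * lqL_poly m (q * w) + lqL_poly m (q\<^sup>2 * w)
     = w * (lqL_poly m w - lqL_eigenvalue m * lqL_poly m (q * w) + q * lqL_poly m (q\<^sup>2 * w))"
proof -
  have padded: "lqL_poly m v = (\<Sum>j\<le>m + 1. lqL_coeff m j * v ^ j)" for v
    by (rule lqL_poly_eq_sum) simp
  have "lqL_poly m w - 2 * lqL_poly m (q * w) + lqL_poly m (q\<^sup>2 * w)
      = (\<Sum>j\<le>m + 1. lqL_coeff m j * (1 - q ^ j)\<^sup>2 * w ^ j)"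
    unfolding padded
    by (simp add: sum_distrib_left sum_subtractf[symmetric] sum.distrib[symmetric] power_mult_distrib
        algebra_simps power2_eq_square)
  also have "\<dots> = (\<Sum>j\<le>m. lqL_coeff m (j + 1) * (1 - q ^ (j + 1))\<^sup>2 * w ^ (j + 1))"
    by (simp add: sum.atMost_Suc_shift del: sum.atMost_Suc)
  also have "\<dots> = (\<Sum>j\<le>m. (1 - lqL_eigenvalue m * q ^ j + q ^ (2 * j + 1)) * lqL_coeff m j * w ^ (j + 1))"
    using lqL_coeff_Suc by (simp add: mult.commute)
  also have "\<dots> = w * (\<Sum>j\<le>m. lqL_coeff m j * w ^ j - lqL_eigenvalue m * (lqL_coeff m j * (q * w) ^ j)
      + q * (lqL_coeff m j * (q\<^sup>2 * w) ^ j))"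
    unfolding sum_distrib_left
    by (intro sum.cong) (simp_all add: algebra_simps power_mult_distrib power2_eq_square power_add power_mult)
  also have "\<dots> = w * (lqL_poly m w - lqL_eigenvalue m * lqL_poly m (q * w) + q * lqL_poly m (q\<^sup>2 * w))"
    unfolding lqL_poly_def by (simp add: sum.distrib sum_subtractf sum_distrib_left)
  finally show ?thesis .
qed

definition lqL_grid :: "nat \<Rightarrow> nat \<Rightarrow> real" where
  "lqL_grid j m = littleqLegendre q m (1 - q ^ j)"

lemma lqL_grid_eq_poly: "lqL_grid j m = lqL_poly m (q * q ^ j)"
  by (simp add: lqL_grid_def littleqLegendre_eq_poly)

lemma lqL_grid_dual_recurrence:
  "(1 - q ^ (j + 1)) * lqL_grid (j + 1) m
     = (2 - lqL_eigenvalue m * q ^ j) * lqL_grid j m - (1 - q ^ j) * lqL_grid (j - 1) m"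
proof -
  have "(1 - q ^ j) * lqL_grid (j - 1) m = (1 - q ^ j) * lqL_poly m (q ^ j)"
    by (cases j) (simp_all add: lqL_grid_eq_poly)
  moreover have "lqL_poly m (q ^ j) - 2 * lqL_grid j m + lqL_grid (j + 1) m
      = q ^ j * (lqL_poly m (q ^ j) - lqL_eigenvalue m * lqL_grid j m + q * lqL_grid (j + 1) m)"
    using lqL_poly_q_difference[of m "q ^ j"] by (simp add: lqL_grid_eq_poly power2_eq_square mult.assoc)
  ultimately show ?thesis
    by (simp add: algebra_simps)
qed

lemma lqL_grid_0 [simp]: "lqL_grid j 0 = 1"
  by (simp add: lqL_grid_eq_poly)

lemma lqL_grid_1: "lqL_grid j 1 = 1 - (1 + q) * q ^ j"
  using q_pos lqL_poly_1[of "q * q ^ j"] by (simp add: lqL_grid_eq_poly)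

lemma lqL_grid_three_term:
  assumes "1 \<le> m"
  shows "(1 - (1 + q) * q ^ j) * lqL_grid j m
           = lqa q m * lqL_grid j (m + 1) + lqb q m * lqL_grid j m + lqc q m * lqL_grid j (m - 1)"
proof -
  have "(1 + q) / q * (q * q ^ j) = (1 + q) * q ^ j"
    using q_pos by simp
  from lqL_poly_recurrence[OF assms, of "q * q ^ j", unfolded this] show ?thesis
    using assms by (simp add: lqL_grid_eq_poly lqb_def algebra_simps)
qed

lemma lqL_eigenvalue_strict_mono: "strict_mono lqL_eigenvalue"
proof (rule strict_mono_Suc_iff[THEN iffD2], intro allI)
  fix m
  define X where "X = q ^ Suc m"
  have X: "0 < X" "X < 1"
    unfolding X_def using q_pos q_power_Suc_less_1 by simp_all
  then have "X * X < 1 * 1"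
    by (intro mult_strict_mono) auto
  with X have "X < 1 / X"
    by (simp add: field_simps)
  then have "0 < (1 - q) * (1 / X - X)"
    using q_less_1 by simp
  moreover have "lqL_eigenvalue (Suc m) - lqL_eigenvalue m = (1 - q) * (1 / X - X)"
    unfolding lqL_eigenvalue_def X_def using q_pos by (simp add: field_simps)
  ultimately show "lqL_eigenvalue m < lqL_eigenvalue (Suc m)"
    by linarith
qed

lemma lqL_grid_tendsto_1: "(\<lambda>j. lqL_grid j m) \<longlonglongrightarrow> 1"
proof -
  have "(\<lambda>j. q * q ^ j) \<longlonglongrightarrow> 0"
    using LIMSEQ_power_zero[of q] q_pos q_less_1 tendsto_mult_right_zero by force
  then have "(\<lambda>j. lqL_poly m (q * q ^ j)) \<longlonglongrightarrow> lqL_poly m 0"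
    unfolding lqL_poly_def by (intro tendsto_intros)
  then show ?thesis
    by (simp add: lqL_grid_eq_poly)
qed

lemma lqL_grid_bounded: "\<exists>B. \<forall>j. \<bar>lqL_grid j m\<bar> \<le> B"
  using convergent_imp_Bseq[OF convergentI[OF lqL_grid_tendsto_1]] unfolding Bseq_def by auto

lemma lqL_grid_product_summable: "summable (\<lambda>j. q ^ j * (lqL_grid j m * lqL_grid j l))"
proof -
  obtain B1 B2 where "\<And>j. \<bar>lqL_grid j m\<bar> \<le> B1" "\<And>j. \<bar>lqL_grid j l\<bar> \<le> B2"
    using lqL_grid_bounded by metis
  then have "\<bar>lqL_grid j m\<bar> * \<bar>lqL_grid j l\<bar> \<le> B1 * B2" for j
    by (meson abs_ge_zero mult_mono order_trans)
  then have "norm (q ^ j * (lqL_grid j m * lqL_grid j l)) \<le> B1 * B2 * q ^ j" for j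
    using mult_left_mono[of "\<bar>lqL_grid j m\<bar> * \<bar>lqL_grid j l\<bar>" "B1 * B2" "q ^ j"] q_pos
    by (simp add: abs_mult mult.commute)
  moreover have "summable (\<lambda>j. B1 * B2 * q ^ j)"
    using q_pos q_less_1 by (intro summable_mult summable_geometric) simp
  ultimately show ?thesis
    by (rule summable_comparison_test'[rotated])
qed

text \<open>Summation by parts of the dual recurrence (a discrete Green identity).\<close>

lemma lqL_grid_green:
  "(1 - q ^ (N + 1)) * (lqL_grid (N + 1) m * lqL_grid N l - lqL_grid N m * lqL_grid (N + 1) l)
     = (lqL_eigenvalue l - lqL_eigenvalue m) * (\<Sum>j\<le>N. q ^ j * (lqL_grid j m * lqL_grid j l))"
proof (induction N)
  case 0
  have dual: "(1 - q) * lqL_grid 1 m = (2 - lqL_eigenvalue m) * lqL_grid 0 m" for m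
    using lqL_grid_dual_recurrence[of 0 m] by simp
  have "(1 - q ^ (0 + 1)) * (lqL_grid (0 + 1) m * lqL_grid 0 l - lqL_grid 0 m * lqL_grid (0 + 1) l)
      = ((1 - q) * lqL_grid 1 m) * lqL_grid 0 l - lqL_grid 0 m * ((1 - q) * lqL_grid 1 l)"
    by (simp add: algebra_simps)
  also have "\<dots> = (lqL_eigenvalue l - lqL_eigenvalue m) * (lqL_grid 0 m * lqL_grid 0 l)"
    unfolding dual by (simp add: algebra_simps)
  finally show ?case
    by simp
next
  case (Suc N)
  let ?d = "\<lambda>m. (1 - q ^ (N + 2)) * lqL_grid (N + 2) m"
  have dual: "?d m = (2 - lqL_eigenvalue m * q ^ (N + 1)) * lqL_grid (N + 1) m - (1 - q ^ (N + 1)) * lqL_grid N m"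
    for m
    using lqL_grid_dual_recurrence[of "N + 1" m] by (simp add: numeral_2_eq_2)
  have "(1 - q ^ (Suc N + 1)) * (lqL_grid (Suc N + 1) m * lqL_grid (Suc N) l - lqL_grid (Suc N) m * lqL_grid (Suc N + 1) l)
      = ?d m * lqL_grid (N + 1) l - lqL_grid (N + 1) m * ?d l"
    by (simp add: algebra_simps numeral_2_eq_2)
  also have "\<dots> = (lqL_eigenvalue l - lqL_eigenvalue m) * (q ^ (N + 1) * (lqL_grid (N + 1) m * lqL_grid (N + 1) l))
       + (1 - q ^ (N + 1)) * (lqL_grid (N + 1) m * lqL_grid N l - lqL_grid N m * lqL_grid (N + 1) l)"
    unfolding dual by (simp add: algebra_simps)
  finally show ?case
    unfolding Suc.IH by (simp add: algebra_simps)
qed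


lemma lqL_grid_orthogonal:
  assumes "m \<noteq> l"
  shows "(\<lambda>j. q ^ j * (lqL_grid j m * lqL_grid j l)) sums 0"
proof -
  have eigen_ne: "lqL_eigenvalue l - lqL_eigenvalue m \<noteq> 0"
    using strict_mono_eq[OF lqL_eigenvalue_strict_mono] assms by simp
  have shifted: "(\<lambda>N. lqL_grid (N + 1) k) \<longlonglongrightarrow> 1" for k
    using LIMSEQ_Suc[OF lqL_grid_tendsto_1[of k]] by simp
  have weight: "(\<lambda>N. 1 - q ^ (N + 1)) \<longlonglongrightarrow> 1 - 0"
    using LIMSEQ_Suc[OF LIMSEQ_power_zero[of q]] q_pos q_less_1 by (intro tendsto_diff) auto
  have "(\<lambda>N. (1 - q ^ (N + 1)) * (lqL_grid (N + 1) m * lqL_grid N l - lqL_grid N m * lqL_grid (N + 1) l)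
      / (lqL_eigenvalue l - lqL_eigenvalue m)) \<longlonglongrightarrow> (1 - 0) * (1 * 1 - 1 * 1) / (lqL_eigenvalue l - lqL_eigenvalue m)"
    by (intro tendsto_divide tendsto_mult tendsto_diff weight shifted lqL_grid_tendsto_1
        tendsto_const eigen_ne)
  then have "(\<lambda>N. \<Sum>j<Suc N. q ^ j * (lqL_grid j m * lqL_grid j l)) \<longlonglongrightarrow> 0"
    unfolding lqL_grid_green lessThan_Suc_atMost using eigen_ne by simp
  then show ?thesis
    unfolding sums_def by (rule LIMSEQ_imp_Suc)
qed

definition lqL_norm :: "nat \<Rightarrow> real" where
  "lqL_norm m = (\<Sum>j. q ^ j * (lqL_grid j m)\<^sup>2)"

lemma lqL_grid_inner_sums:
  "(\<lambda>j. q ^ j * (lqL_grid j m * lqL_grid j l)) sums (if m = l then lqL_norm m else 0)"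
  using lqL_grid_orthogonal summable_sums[OF lqL_grid_product_summable[of m m]]
  by (auto simp: lqL_norm_def power2_eq_square)

lemma lqL_norm_0: "lqL_norm 0 = 1 / (1 - q)"
  using lqL_grid_inner_sums[of 0 0] geometric_sums[of q] q_pos q_less_1 sums_unique2 by simp

lemma lqL_grid_weighted_sums:
  assumes "1 \<le> m"
  shows "(\<lambda>j. q ^ j * ((1 - (1 + q) * q ^ j) * lqL_grid j m * lqL_grid j l)) sums
           (lqa q m * (if m + 1 = l then lqL_norm (m + 1) else 0) + lqb q m * (if m = l then lqL_norm m else 0)
            + lqc q m * (if m - 1 = l then lqL_norm (m - 1) else 0))"
proof -
  have expand: "q ^ j * ((1 - (1 + q) * q ^ j) * lqL_grid j m * lqL_grid j l)
      = lqa q m * (q ^ j * (lqL_grid j (m + 1) * lqL_grid j l)) + lqb q m * (q ^ j * (lqL_grid j m * lqL_grid j l))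
        + lqc q m * (q ^ j * (lqL_grid j (m - 1) * lqL_grid j l))" for j
    unfolding lqL_grid_three_term[OF assms] by (simp add: algebra_simps)
  show ?thesis
    unfolding expand by (intro sums_add sums_mult lqL_grid_inner_sums)
qed

lemma lqL_norm_recurrence: "(if m = 0 then 1 else lqa q m) * lqL_norm (m + 1) = lqc q (m + 1) * lqL_norm m"
proof -
  let ?g = "\<lambda>j. q ^ j * ((1 - (1 + q) * q ^ j) * lqL_grid j m * lqL_grid j (m + 1))"
  have "?g sums ((if m = 0 then 1 else lqa q m) * lqL_norm (m + 1))"
  proof (cases "m = 0")
    case True
    then show ?thesis
      using lqL_grid_inner_sums[of 1 1] by (simp add: lqL_grid_1[unfolded One_nat_def])
  next
    case False
    moreover have "m - 1 \<noteq> m + 1"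
      by simp
    ultimately show ?thesis
      using lqL_grid_weighted_sums[of m "m + 1"] by simp
  qed
  moreover have "?g sums (lqc q (m + 1) * lqL_norm m)"
    using lqL_grid_weighted_sums[of "m + 1" m] by (simp add: mult_ac)
  ultimately show ?thesis
    by (rule sums_unique2)
qed

lemma lqc_Suc: "lqc q (m + 1) * (1 - q ^ (2 * m + 3)) = q * (1 - q ^ (2 * m + 1)) * (if m = 0 then 1 else lqa q m)"
proof -
  define A where "A = q ^ m"
  have powers: "q ^ (m + 1) = q * A" "q ^ (2 * m + 3) = q ^ 3 * A\<^sup>2" "q ^ (2 * m + 1) = q * A\<^sup>2"
    unfolding A_def by (simp_all add: power_add power_mult power2_eq_square mult_ac)
  have c: "lqc q (m + 1) * ((1 - q * (q * A)\<^sup>2) * (1 + q * A)) = q * A * (1 + q) * (1 - q * A)"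
    using lqc_cleared[of "m + 1"] unfolding powers by simp
  have "1 + q * A \<noteq> 0"
    using q_pos unfolding A_def by (smt (verit) q_power_pos mult_pos_pos)
  show ?thesis
  proof (cases "m = 0")
    case True
    then have "A = 1"
      unfolding A_def by simp
    with c \<open>1 + q * A \<noteq> 0\<close> have "lqc q (m + 1) * (1 - q ^ 3 * A\<^sup>2) = q * (1 - q * A\<^sup>2)"
      by algebra
    with True show ?thesis
      unfolding powers by simp
  next
    case False
    then have "lqa q m * ((1 - q * A\<^sup>2) * (1 + q * A)) = A * (1 + q) * (1 - q * A)"
      using lqa_cleared unfolding A_def by simp
    with c \<open>1 + q * A \<noteq> 0\<close> have "lqc q (m + 1) * (1 - q ^ 3 * A\<^sup>2) = q * (1 - q * A\<^sup>2) * lqa q m"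
      by algebra
    with False show ?thesis
      unfolding powers by simp
  qed
qed

lemma lqL_norm_eq: "lqL_norm m = q ^ m / (1 - q ^ (2 * m + 1))"
proof (induction m)
  case 0
  then show ?case
    by (simp add: lqL_norm_0)
next
  case (Suc m)
  define a where "a = (if m = 0 then 1 else lqa q m)"
  have "a \<noteq> 0"
    using lqa_pos[of m] unfolding a_def by simp
  have "1 - q ^ (2 * m + 3) \<noteq> 0" "1 - q ^ (2 * m + 1) \<noteq> 0"
    using q_power_less_1_iff[of "2 * m + 3"] q_power_less_1_iff[of "2 * m + 1"] by linarith+
  have "a * (lqL_norm (m + 1) * (1 - q ^ (2 * m + 3))) = (lqc q (m + 1) * (1 - q ^ (2 * m + 3))) * lqL_norm m"
    using lqL_norm_recurrence[of m, folded a_def] by (metis mult.assoc mult.commute)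
  also have "\<dots> = a * (q * (1 - q ^ (2 * m + 1)) * lqL_norm m)"
    unfolding lqc_Suc[of m, folded a_def] by (simp add: mult_ac)
  finally have "lqL_norm (m + 1) * (1 - q ^ (2 * m + 3)) = q * (1 - q ^ (2 * m + 1)) * lqL_norm m"
    using \<open>a \<noteq> 0\<close> by simp
  also have "\<dots> = q ^ (m + 1)"
    using Suc.IH \<open>1 - q ^ (2 * m + 1) \<noteq> 0\<close> by simp
  finally have "lqL_norm (m + 1) = q ^ (m + 1) / (1 - q ^ (2 * m + 3))"
    using \<open>1 - q ^ (2 * m + 3) \<noteq> 0\<close> by (simp add: eq_divide_eq)
  moreover have "2 * (m + 1) + 1 = 2 * m + 3"
    by simp
  ultimately show ?case
    by (simp only: Suc_eq_plus1)
qed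

section \<open>Bessel's inequality at a grid point\<close>

lemma lqL_norm_pos: "0 < lqL_norm m"
  using q_power_less_1_iff[of "2 * m + 1"] by (simp add: lqL_norm_eq)

text \<open>Bessel's inequality for the point mass at \<open>1 - q ^ n\<close>: the polynomial
  \<open>\<pi> = \<Sum>m\<le>M. (R\<^sub>m(1 - q ^ n) / h\<^sub>m) R\<^sub>m\<close> has weighted squared norm \<open>\<pi>(1 - q ^ n)\<close>,
  which dominates the single term \<open>q ^ n \<pi>(1 - q ^ n)\<^sup>2\<close>.\<close>

lemma lqL_christoffel: "(\<Sum>m\<le>M. (lqL_grid n m)\<^sup>2 / lqL_norm m) \<le> 1 / q ^ n"
proof -
  define c where "c m = lqL_grid n m / lqL_norm m" for m
  define S where "S = (\<Sum>m\<le>M. (lqL_grid n m)\<^sup>2 / lqL_norm m)"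
  define \<pi> where "\<pi> j = (\<Sum>m\<le>M. c m * lqL_grid j m)" for j
  have "(\<lambda>j. \<Sum>m\<le>M. \<Sum>l\<le>M. c m * c l * (q ^ j * (lqL_grid j m * lqL_grid j l)))
      sums (\<Sum>m\<le>M. \<Sum>l\<le>M. c m * c l * (if m = l then lqL_norm m else 0))"
    by (intro sums_sum sums_mult lqL_grid_inner_sums)
  moreover have "(\<Sum>m\<le>M. \<Sum>l\<le>M. c m * c l * (if m = l then lqL_norm m else 0))
      = (\<Sum>m\<le>M. c m * c m * lqL_norm m)"
    by (simp add: if_distrib sum.delta cong: if_cong)
  moreover have "\<dots> = S"
    unfolding S_def c_def using lqL_norm_pos by (intro sum.cong) (simp_all add: power2_eq_square)
  moreover have "(\<Sum>m\<le>M. \<Sum>l\<le>M. c m * c l * (q ^ j * (lqL_grid j m * lqL_grid j l))) = q ^ j * (\<pi> j)\<^sup>2"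
    for j
  proof -
    have "(\<pi> j)\<^sup>2 = (\<Sum>m\<le>M. \<Sum>l\<le>M. c m * c l * (lqL_grid j m * lqL_grid j l))"
      unfolding \<pi>_def power2_eq_square sum_product by (simp add: mult_ac)
    then show ?thesis
      by (simp add: sum_distrib_left mult_ac)
  qed
  ultimately have sums: "(\<lambda>j. q ^ j * (\<pi> j)\<^sup>2) sums S"
    by simp
  have "\<pi> n = S"
    unfolding \<pi>_def S_def c_def by (simp add: power2_eq_square)
  have "q ^ n * S\<^sup>2 \<le> S"
    using sum_le_suminf[of "\<lambda>j. q ^ j * (\<pi> j)\<^sup>2" "{n}"] sums q_pos
    by (simp add: sums_iff \<open>\<pi> n = S\<close>)
  moreover have "0 < S"
    unfolding S_def using lqL_norm_pos
    by (intro sum_pos2[of _ 0]) (auto simp: lqL_norm_0 q_less_1 intro!: divide_nonneg_pos)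
  ultimately have "q ^ n * S \<le> 1"
    by (simp add: power2_eq_square)
  then show ?thesis
    unfolding S_def[symmetric] using q_pos by (simp add: field_simps)
qed

lemma lqL_grid_square_le:
  assumes "1 \<le> M"
  shows "(lqL_grid n M)\<^sup>2 \<le> (1 / q ^ n - (1 - q)) * (q ^ M / (1 - q ^ (2 * M + 1)))"
proof -
  have "(lqL_grid n M)\<^sup>2 / lqL_norm M + (lqL_grid n 0)\<^sup>2 / lqL_norm 0
      = (\<Sum>m\<in>{0, M}. (lqL_grid n m)\<^sup>2 / lqL_norm m)"
    using assms by simp
  also have "\<dots> \<le> (\<Sum>m\<le>M. (lqL_grid n m)\<^sup>2 / lqL_norm m)"
    using lqL_norm_pos by (intro sum_mono2) (auto intro!: divide_nonneg_pos)
  also have "\<dots> \<le> 1 / q ^ n"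
    by (rule lqL_christoffel)
  finally have "(lqL_grid n M)\<^sup>2 / lqL_norm M \<le> 1 / q ^ n - (1 - q)"
    using q_less_1 by (simp add: lqL_norm_0)
  then have "(lqL_grid n M)\<^sup>2 \<le> (1 / q ^ n - (1 - q)) * lqL_norm M"
    using lqL_norm_pos[of M] by (simp add: pos_divide_le_eq)
  then show ?thesis
    by (simp only: lqL_norm_eq)
qed

lemma q_power_le_4_5:
  assumes "0 < K" and K: "q ^ (K + 1) \<le> 1 / 4"
  shows "q ^ K \<le> 4 / 5"
proof (cases "q \<le> 4 / 5")
  case True
  then show ?thesis
    using assms power_decreasing[of 1 K q] q_pos q_less_1 by simp
next
  case False
  then have "q ^ K * (4 / 5) \<le> q ^ K * q"
    using mult_left_mono[of "4 / 5" q "q ^ K"] by simp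
  moreover have "q ^ K * q \<le> 1 / 4"
    using K by (simp add: mult.commute)
  ultimately show ?thesis
    by linarith
qed

lemma christoffel_weight_numerator_le:
  assumes K: "q ^ (K + 1) \<le> 1 / 4"
  shows "q ^ K * (1 - (1 - q) * q ^ n) \<le> 1 - q ^ (2 * (n + K) + 1)"
proof (cases "K = 0")
  case True
  have "q ^ (n + 1) \<le> q ^ 1"
    using q_pos q_less_1 by (intro power_decreasing) auto
  with K True have "q ^ (n + 1) \<le> 1 - q"
    by simp
  then have "q ^ n * q ^ (n + 1) \<le> q ^ n * (1 - q)"
    using mult_left_mono[of _ _ "q ^ n"] by simp
  moreover have "q ^ (2 * (n + K) + 1) = q ^ n * q ^ (n + 1)"
    using True by (simp add: power_add[symmetric] mult_2)
  ultimately show ?thesis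
    using True q_pos by (simp add: algebra_simps)
next
  case False
  have "q ^ (2 * (n + K) + 1) \<le> q ^ (K + (K + 1))"
    using q_pos q_less_1 by (intro power_decreasing) auto
  also have "\<dots> \<le> q ^ K / 4"
    using K q_pos by (simp add: power_add mult_left_mono)
  finally have "q ^ (2 * (n + K) + 1) \<le> q ^ K / 4" .
  moreover have "q ^ K \<le> 4 / 5"
    using False K q_power_le_4_5 by simp
  moreover have "q ^ K * (1 - (1 - q) * q ^ n) \<le> q ^ K"
    using q_pos q_less_1 by (simp add: mult_left_le)
  ultimately show ?thesis
    by linarith
qed

lemma christoffel_weight_le_1:
  assumes "q ^ (K + 1) \<le> 1 / 4"
  shows "(1 / q ^ n - (1 - q)) * (q ^ (n + K) / (1 - q ^ (2 * (n + K) + 1))) \<le> 1"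
proof -
  have "(1 / q ^ n - (1 - q)) * q ^ (n + K) = q ^ K * (1 - (1 - q) * q ^ n)"
    using q_pos by (simp add: field_simps power_add)
  moreover have "0 < 1 - q ^ (2 * (n + K) + 1)"
    by simp
  ultimately show ?thesis
    using christoffel_weight_numerator_le[OF assms, of n] by (simp add: divide_le_eq mult.assoc[symmetric])
qed

lemma lqL_grid_diagonal_abs_le_1:
  assumes "q ^ (K + 1) \<le> 1 / 4"
  shows "\<bar>lqL_grid n (n + K)\<bar> \<le> 1"
proof (cases "n + K = 0")
  case False
  then have "1 \<le> n + K"
    by arith
  from order_trans[OF lqL_grid_square_le[OF this] christoffel_weight_le_1[OF assms]]
  have "(lqL_grid n (n + K))\<^sup>2 \<le> 1" .
  then show ?thesis
    by (simp add: abs_square_le_1)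
qed simp

section \<open>The scaled values and their recurrence\<close>

lemma lqL_coeffs_at_0:
  assumes "1 \<le> m"
  shows "(q + lqb q m) * q ^ m - lqc q m = lqa q m * (q ^ m)\<^sup>2 * q"
proof -
  define A where "A = q ^ m"
  have "1 - q * A\<^sup>2 \<noteq> 0"
    using q_power_less_1_iff[of "2 * m + 1"] unfolding A_def power_2m1_eq by simp
  moreover have "lqb q m = 1 - lqa q m - lqc q m"
    using assms by (simp add: lqb_def)
  ultimately have "(q + lqb q m) * A - lqc q m = lqa q m * A\<^sup>2 * q"
    using lqa_cleared[OF assms, folded A_def] lqc_cleared[OF assms, folded A_def] by algebra
  then show ?thesis
    unfolding A_def .
qed

definition tri :: "nat \<Rightarrow> nat" where
  "tri k = k * (k + 1) div 2"

lemma tri_Suc: "tri (Suc k) = tri k + Suc k"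
proof -
  have "Suc k * (Suc k + 1) = k * (k + 1) + 2 * (k + 1)"
    by (simp add: algebra_simps)
  then show ?thesis
    unfolding tri_def by simp
qed

lemma lqL_pair_at_0: "lqL_pair q 0 m = ((-1) ^ m * q ^ tri m, (-1) ^ (m + 1) * q ^ tri (m + 1))"
proof (induction m)
  case 0
  show ?case
    using q_pos by (simp add: tri_def lqa_def lqb_def field_simps)
next
  case (Suc m)
  define A where "A = q ^ Suc m"
  have R1: "(0 - lqb q 0) / lqa q 0 = - q"
    using q_pos by (simp add: lqa_def lqb_def field_simps)
  have "((- q - lqb q (Suc m)) * ((-1) ^ (m + 1) * q ^ tri (m + 1)) - lqc q (Suc m) * ((-1) ^ m * q ^ tri m))
      = (-1) ^ m * q ^ tri m * ((q + lqb q (Suc m)) * A - lqc q (Suc m))"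
    unfolding A_def by (simp add: tri_Suc power_add algebra_simps)
  also have "\<dots> = (-1) ^ m * q ^ tri m * (lqa q (Suc m) * A\<^sup>2 * q)"
    using lqL_coeffs_at_0[of "Suc m"] unfolding A_def by simp
  also have "\<dots> = lqa q (Suc m) * ((-1) ^ (Suc m + 1) * q ^ tri (Suc m + 1))"
    unfolding A_def by (simp add: tri_Suc power_add power2_eq_square algebra_simps)
  finally show ?case
    using Suc.IH R1 lqa_pos[of "Suc m"] by (simp add: Let_def)
qed

definition lqL_scaled :: "nat \<Rightarrow> nat \<Rightarrow> real" where
  "lqL_scaled n k = (-1) ^ k * lqL_grid n (n + k) / q ^ tri k"

lemma lqL_grid_eq_scaled: "lqL_grid n (n + k) = (-1) ^ k * q ^ tri k * lqL_scaled n k"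
  using q_pos by (simp add: lqL_scaled_def)

lemma lqL_scaled_0 [simp]: "lqL_scaled 0 k = 1"
  using lqL_pair_at_0[of k] q_pos by (simp add: lqL_scaled_def lqL_grid_def littleqLegendre_def)

lemma lqL_eigenvalue_mult: "lqL_eigenvalue (n + k + 1) * q ^ n * q ^ (k + 1) = 1 + q ^ (2 * n + 1) * (q ^ (k + 1))\<^sup>2"
proof -
  have "lqL_eigenvalue (n + k + 1) * q ^ n * q ^ (k + 1) = 1 + q ^ (n + k + 1 + 1) * q ^ (n + k + 1)"
    unfolding lqL_eigenvalue_def using q_pos by (simp add: field_simps power_add)
  also have "q ^ (n + k + 1 + 1) * q ^ (n + k + 1) = q ^ (2 * n + 1) * (q ^ (k + 1))\<^sup>2"
  proof -
    have "n + k + 1 + 1 + (n + k + 1) = (2 * n + 1) + (k + 1) * 2"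
      by simp
    then show ?thesis
      by (metis power_add power_mult)
  qed
  finally show ?thesis .
qed

lemma lqL_scaled_recurrence:
  "(1 - q ^ (n + 1)) * lqL_scaled (n + 1) k
     = (1 - 2 * q ^ (k + 1) + q ^ (2 * n + 1) * (q ^ (k + 1))\<^sup>2) * lqL_scaled n (k + 1)
       - (1 - q ^ n) * q * (q ^ (k + 1))\<^sup>2 * lqL_scaled (n - 1) (k + 2)"
proof -
  define s where "s = ((-1) ^ k * q ^ tri k :: real)"
  define z where "z = q ^ (k + 1)"
  have grid: "lqL_grid (n + 1) (n + k + 1) = s * lqL_scaled (n + 1) k"
       "lqL_grid n (n + k + 1) = - (s * z * lqL_scaled n (k + 1))"
    unfolding s_def z_def using lqL_grid_eq_scaled[of "n + 1" k] lqL_grid_eq_scaled[of n "k + 1"]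
    by (simp_all add: tri_Suc power_add)
  have "(1 - q ^ n) * lqL_grid (n - 1) (n + k + 1) = (1 - q ^ n) * (s * (q * z\<^sup>2) * lqL_scaled (n - 1) (k + 2))"
  proof (cases n)
    case (Suc n')
    then show ?thesis
      using lqL_grid_eq_scaled[of n' "k + 2"] unfolding s_def z_def numeral_2_eq_2
      by (simp add: tri_Suc power_add power2_eq_square)
  qed simp
  note dual = lqL_grid_dual_recurrence[of n "n + k + 1", unfolded grid this]
  define P where "P = q ^ n"
  define W where "W = q ^ (2 * n + 1)"
  have qP: "q ^ (n + 1) = q * P"
    unfolding P_def by simp
  have "lqL_eigenvalue (n + k + 1) * P * z = 1 + W * z\<^sup>2"
    unfolding P_def W_def z_def using lqL_eigenvalue_mult by simp
  moreover have "s \<noteq> 0"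
    unfolding s_def using q_pos by simp
  ultimately show ?thesis
    using dual unfolding qP z_def[symmetric] P_def[symmetric] W_def[symmetric] by algebra
qed

end

section \<open>Positive solutions of the scaled recurrence\<close>

lemma recurrence_lower_bound_step:
  fixes q z p S0 S1 :: real
  assumes q: "0 < q" "q < 1" and z: "0 < z" "4 * z \<le> 1" and p: "0 < p" "p \<le> 1" and "0 < S1"
    and IH: "(1 - 2 * (q * z)) * S0 < 2 * (p * S1)"
  shows "2 * (p * q * z\<^sup>2) * S0 < (1 - 2 * z) * S1"
proof -
  have "q * z \<le> z"
    using q z by (simp add: mult_le_cancel_right1)
  then have pos: "0 < 1 - 2 * (q * z)" "0 < p * q * z\<^sup>2"
    using q z p by (linarith, simp)
  have "(1 - 2 * z) * (1 - 2 * z) \<le> (1 - 2 * z) * (1 - 2 * (q * z))"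
    using \<open>q * z \<le> z\<close> z by (intro mult_left_mono) auto
  moreover have "(2 * z) * (2 * z) \<le> (1 - 2 * z) * (1 - 2 * z)"
    using z by (intro mult_mono) auto
  moreover have "p * p * q \<le> 1"
    using q p by (intro mult_le_one) (simp_all add: mult_le_one)
  then have "p * p * (q * z\<^sup>2) \<le> z\<^sup>2"
    using mult_right_mono[of "p * p * q" 1 "z\<^sup>2"] by (simp add: mult.assoc)
  ultimately have bound: "4 * (p * p * (q * z\<^sup>2)) \<le> (1 - 2 * z) * (1 - 2 * (q * z))"
    by (simp add: power2_eq_square)
  have "(1 - 2 * (q * z)) * (2 * (p * q * z\<^sup>2) * S0) = 2 * (p * q * z\<^sup>2) * ((1 - 2 * (q * z)) * S0)"
    by (simp add: algebra_simps)
  also have "\<dots> < 2 * (p * q * z\<^sup>2) * (2 * (p * S1))"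
    using pos by (intro mult_strict_left_mono[OF IH]) simp
  also have "\<dots> = (4 * (p * p * (q * z\<^sup>2))) * S1"
    by (simp add: algebra_simps)
  also have "\<dots> \<le> ((1 - 2 * z) * (1 - 2 * (q * z))) * S1"
    using bound \<open>0 < S1\<close> by (intro mult_right_mono) auto
  also have "\<dots> = (1 - 2 * (q * z)) * ((1 - 2 * z) * S1)"
    by simp
  finally show ?thesis
    using mult_less_cancel_left_pos[OF pos(1)] by blast
qed

text \<open>The sign analysis uses nothing about \<open>lqL_scaled\<close> beyond its recurrence, its initial
  row and \<open>q ^ (K + 1) \<le> 1 / 4\<close>.\<close>

locale scaled_recurrence = little_q_Legendre +
  fixes S :: "nat \<Rightarrow> nat \<Rightarrow> real" and K :: nat
  assumes S_0: "S 0 k = 1"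
    and S_recurrence: "(1 - q ^ (n + 1)) * S (n + 1) k
          = (1 - 2 * q ^ (k + 1) + q ^ (2 * n + 1) * (q ^ (k + 1))\<^sup>2) * S n (k + 1)
            - (1 - q ^ n) * q * (q ^ (k + 1))\<^sup>2 * S (n - 1) (k + 2)"
    and K_bound: "q ^ (K + 1) \<le> 1 / 4"
begin

lemma four_q_power_le_1:
  assumes "K \<le> k"
  shows "4 * q ^ (k + 1) \<le> 1"
proof -
  have "q ^ (k + 1) \<le> q ^ (K + 1)"
    using assms q_pos q_less_1 by (intro power_decreasing) auto
  with K_bound show ?thesis
    by linarith
qed

lemma S_1_lower_bound:
  assumes "K \<le> k"
  shows "0 < S 1 k" "(1 - 2 * q ^ (k + 1)) * S 0 (k + 1) < 2 * ((1 - q ^ 1) * S 1 k)"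
proof -
  define z where "z = q ^ (k + 1)"
  have z: "0 < z" "4 * z \<le> 1" "0 < q * z\<^sup>2"
    using four_q_power_le_1[OF assms] q_pos unfolding z_def by simp_all
  have S1: "(1 - q) * S 1 k = 1 - 2 * z + q * z\<^sup>2"
    using S_recurrence[of 0 k] unfolding z_def by (simp add: S_0)
  then have "0 < (1 - q) * S 1 k"
    using z by linarith
  then show "0 < S 1 k"
    using q_less_1 by (simp add: zero_less_mult_iff)
  show "(1 - 2 * q ^ (k + 1)) * S 0 (k + 1) < 2 * ((1 - q ^ 1) * S 1 k)"
    using S1 z unfolding z_def[symmetric] by (simp add: S_0)
qed

lemma S_lower_bound_step:
  assumes "K \<le> k" and pos: "0 < S (n + 1) (k + 1)"
    and IH: "(1 - 2 * q ^ (k + 2)) * S n (k + 2) < 2 * ((1 - q ^ (n + 1)) * S (n + 1) (k + 1))"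
  shows "0 < S (n + 2) k"
    and "(1 - 2 * q ^ (k + 1)) * S (n + 1) (k + 1) < 2 * ((1 - q ^ (n + 2)) * S (n + 2) k)"
proof -
  define z where "z = q ^ (k + 1)"
  have z: "0 < z" "4 * z \<le> 1"
    using four_q_power_le_1[OF \<open>K \<le> k\<close>] q_pos unfolding z_def by simp_all
  have "(1 - 2 * (q * z)) * S n (k + 2) < 2 * ((1 - q ^ (n + 1)) * S (n + 1) (k + 1))"
    using IH unfolding z_def by (simp add: numeral_2_eq_2)
  from recurrence_lower_bound_step[OF q_pos q_less_1 z _ _ pos this]
  have "2 * ((1 - q ^ (n + 1)) * q * z\<^sup>2) * S n (k + 2) < (1 - 2 * z) * S (n + 1) (k + 1)"
    using q_pos by simp
  moreover have "(1 - 2 * z) * S (n + 1) (k + 1)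
      \<le> (1 - 2 * z + q ^ (2 * (n + 1) + 1) * z\<^sup>2) * S (n + 1) (k + 1)"
    using pos q_pos by (intro mult_right_mono) auto
  ultimately have main: "(1 - 2 * z) * S (n + 1) (k + 1) < 2 * ((1 - q ^ (n + 2)) * S (n + 2) k)"
    using S_recurrence[of "n + 1" k] unfolding z_def[symmetric] by (simp add: numeral_2_eq_2)
  then show "(1 - 2 * q ^ (k + 1)) * S (n + 1) (k + 1) < 2 * ((1 - q ^ (n + 2)) * S (n + 2) k)"
    unfolding z_def .
  have "0 < (1 - 2 * z) * S (n + 1) (k + 1)"
    using z pos by simp
  with main have "0 < (1 - q ^ (n + 2)) * S (n + 2) k"
    by linarith
  then show "0 < S (n + 2) k"
    using q_power_less_1_iff[of "n + 2"] by (simp add: zero_less_mult_iff)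
qed

lemma S_pos_lower_bound:
  "\<forall>k\<ge>K. 0 < S n k \<and> 0 < S (n + 1) k
     \<and> (1 - 2 * q ^ (k + 1)) * S n (k + 1) < 2 * ((1 - q ^ (n + 1)) * S (n + 1) k)"
proof (induction n)
  case 0
  then show ?case
    using S_1_lower_bound by (simp add: S_0)
next
  case (Suc n)
  show ?case
  proof (intro allI impI)
    fix k assume "K \<le> k"
    then have "0 < S (n + 1) (k + 1) \<and> (1 - 2 * q ^ (k + 2)) * S n (k + 2) < 2 * ((1 - q ^ (n + 1)) * S (n + 1) (k + 1))"
      using Suc.IH[rule_format, of "k + 1"] by (simp add: numeral_2_eq_2)
    with S_lower_bound_step[OF \<open>K \<le> k\<close>] Suc.IH \<open>K \<le> k\<close> show "0 < S (Suc n) k \<and> 0 < S (Suc n + 1) k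
        \<and> (1 - 2 * q ^ (k + 1)) * S (Suc n) (k + 1) < 2 * ((1 - q ^ (Suc n + 1)) * S (Suc n + 1) k)"
      by (simp add: numeral_2_eq_2)
  qed
qed

lemma S_pos: "K \<le> k \<Longrightarrow> 0 < S n k"
  using S_pos_lower_bound by blast


definition ratio :: "nat \<Rightarrow> nat \<Rightarrow> real" where
  "ratio n k = (1 - q ^ n) * S n k / S (n - 1) (k + 1)"

lemma ratio_lower:
  assumes "K \<le> k"
  shows "1 - 2 * q ^ (k + 1) < 2 * ratio (n + 1) k"
proof -
  have "(1 - 2 * q ^ (k + 1)) * S n (k + 1) < 2 * ((1 - q ^ (n + 1)) * S (n + 1) k)"
    using S_pos_lower_bound assms by blast
  moreover have "0 < S n (k + 1)"
    using S_pos assms by simp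
  ultimately show ?thesis
    by (simp add: ratio_def field_simps)
qed

lemma ratio_pos: "K \<le> k \<Longrightarrow> 1 \<le> n \<Longrightarrow> 0 < ratio n k"
  using S_pos by (simp add: ratio_def)

lemma ratio_1: "ratio 1 k = 1 - 2 * q ^ (k + 1) + q * (q ^ (k + 1))\<^sup>2"
  using S_recurrence[of 0 k] by (simp add: ratio_def S_0)

lemma ratio_recurrence:
  assumes "K \<le> k" "1 \<le> n"
  shows "ratio (n + 1) k = (1 - 2 * q ^ (k + 1) + q ^ (2 * n + 1) * (q ^ (k + 1))\<^sup>2)
                            - q * (q ^ (k + 1))\<^sup>2 * (1 - q ^ n)\<^sup>2 / ratio n (k + 1)"
proof -
  define p where "p = 1 - q ^ n"
  have pos: "0 < S n (k + 1)" "0 < S (n - 1) (k + 2)" "0 < p"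
    using S_pos assms unfolding p_def by simp_all
  have "ratio (n + 1) k = ((1 - 2 * q ^ (k + 1) + q ^ (2 * n + 1) * (q ^ (k + 1))\<^sup>2) * S n (k + 1)
      - p * q * (q ^ (k + 1))\<^sup>2 * S (n - 1) (k + 2)) / S n (k + 1)"
    unfolding ratio_def using S_recurrence[of n k] by (simp add: p_def)
  also have "\<dots> = (1 - 2 * q ^ (k + 1) + q ^ (2 * n + 1) * (q ^ (k + 1))\<^sup>2)
      - q * (q ^ (k + 1))\<^sup>2 * p\<^sup>2 / ratio n (k + 1)"
    unfolding ratio_def[of n "k + 1"] p_def[symmetric] using pos
    by (simp add: field_simps power2_eq_square numeral_2_eq_2)
  finally show ?thesis
    unfolding p_def .
qed

lemma ratio_Suc_le: "\<forall>k\<ge>K. ratio (m + 2) k \<le> ratio (m + 1) k"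
proof (induction m)
  case 0
  show ?case
  proof (intro allI impI)
    fix k assume "K \<le> k"
    have "0 \<le> q * (q ^ (k + 1))\<^sup>2 * (1 - q)\<^sup>2 / ratio 1 (k + 1)"
      using ratio_pos[of "k + 1" 1] \<open>K \<le> k\<close> q_pos by simp
    moreover have "q ^ 3 * (q ^ (k + 1))\<^sup>2 \<le> q * (q ^ (k + 1))\<^sup>2"
      using q_pos q_less_1 by (intro mult_right_mono) (auto simp: power3_eq_cube mult_le_one)
    ultimately show "ratio (0 + 2) k \<le> ratio (0 + 1) k"
      using ratio_recurrence[OF \<open>K \<le> k\<close>, of 1] ratio_1 by (simp add: numeral_3_eq_3)
  qed
next
  case (Suc m)
  show ?case
  proof (intro allI impI)
    fix k assume "K \<le> k"
    let ?n = "m + 1"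
    have "K \<le> k + 1"
      using \<open>K \<le> k\<close> by simp
    have "(1 - q ^ ?n)\<^sup>2 \<le> (1 - q ^ (?n + 1))\<^sup>2"
      using q_pos q_less_1 power_decreasing[of ?n "?n + 1" q] less_imp_le[OF q_mult_power_less_1[of m]]
      by (intro power_mono) auto
    moreover have "0 < ratio (?n + 1) (k + 1)" "ratio (?n + 1) (k + 1) \<le> ratio ?n (k + 1)"
      using ratio_pos \<open>K \<le> k + 1\<close> Suc.IH by (auto simp: numeral_2_eq_2)
    ultimately have frac: "(1 - q ^ ?n)\<^sup>2 / ratio ?n (k + 1) \<le> (1 - q ^ (?n + 1))\<^sup>2 / ratio (?n + 1) (k + 1)"
      by (intro frac_le) auto
    have "q * (q ^ (k + 1))\<^sup>2 * (1 - q ^ ?n)\<^sup>2 / ratio ?n (k + 1)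
        \<le> q * (q ^ (k + 1))\<^sup>2 * (1 - q ^ (?n + 1))\<^sup>2 / ratio (?n + 1) (k + 1)"
      using mult_left_mono[OF frac, of "q * (q ^ (k + 1))\<^sup>2"] q_pos by (simp add: mult.assoc)
    moreover have "q ^ (2 * (?n + 1) + 1) * (q ^ (k + 1))\<^sup>2 \<le> q ^ (2 * ?n + 1) * (q ^ (k + 1))\<^sup>2"
      using q_pos q_less_1 by (intro mult_right_mono power_decreasing) auto
    ultimately show "ratio (Suc m + 2) k \<le> ratio (Suc m + 1) k"
      using ratio_recurrence[OF \<open>K \<le> k\<close>, of ?n] ratio_recurrence[OF \<open>K \<le> k\<close>, of "?n + 1"]
      by simp
  qed
qed

lemma ratio_le_1: "K \<le> k \<Longrightarrow> ratio (m + 1) k \<le> 1"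
proof (induction m)
  case 0
  define z where "z = q ^ (k + 1)"
  have "q * z \<le> 1" "0 < z"
    unfolding z_def using q_pos q_less_1 by (simp_all add: mult_le_one)
  then have "q * z\<^sup>2 \<le> 2 * z"
    using mult_right_mono[of "q * z" 1 z] by (simp add: power2_eq_square mult.assoc)
  then show ?case
    using ratio_1[of k] by (simp add: z_def One_nat_def)
next
  case (Suc m)
  then show ?case
    using ratio_Suc_le[of m] by fastforce
qed

lemma S_Suc_mult_ratio_le: "\<forall>k\<ge>K. S (m + 1) (k + 1) * ratio (m + 1) k \<le> S (m + 1) k"
proof (induction m)
  case 0
  show ?case
  proof (intro allI impI)
    fix k assume "K \<le> k"
    have "ratio 1 (k + 1) * ratio 1 k \<le> ratio 1 k"
      using ratio_le_1[of "k + 1" 0] ratio_pos[of k 1] \<open>K \<le> k\<close> by (simp add: mult_le_cancel_right1)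
    then show "S (0 + 1) (k + 1) * ratio (0 + 1) k \<le> S (0 + 1) k"
      using q_less_1 by (simp add: ratio_def S_0 divide_right_mono)
  qed
next
  case (Suc m)
  show ?case
  proof (intro allI impI)
    fix k assume "K \<le> k"
    let ?n = "m + 1"
    have "K \<le> k + 1"
      using \<open>K \<le> k\<close> by simp
    have S_eq: "S (?n + 1) j = ratio (?n + 1) j * S ?n (j + 1) / (1 - q ^ (?n + 1))" if "K \<le> j" for j
      using S_pos[of "j + 1" ?n] that q_power_less_1_iff[of "?n + 1"] by (simp add: ratio_def)
    have "ratio (?n + 1) (k + 1) * S ?n (k + 2) \<le> ratio ?n (k + 1) * S ?n (k + 2)"
      using ratio_Suc_le[of m] S_pos[of "k + 2" ?n] \<open>K \<le> k + 1\<close> \<open>K \<le> k\<close>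
      by (intro mult_right_mono) (auto simp: numeral_2_eq_2)
    also have "\<dots> \<le> S ?n (k + 1)"
      using Suc.IH \<open>K \<le> k + 1\<close> by (simp add: numeral_2_eq_2 mult.commute)
    finally have "ratio (?n + 1) (k + 1) * S ?n (k + 2) * ratio (?n + 1) k \<le> S ?n (k + 1) * ratio (?n + 1) k"
      using ratio_pos[OF \<open>K \<le> k\<close>, of "?n + 1"] by (intro mult_right_mono) auto
    then show "S (Suc m + 1) (k + 1) * ratio (Suc m + 1) k \<le> S (Suc m + 1) k"
      using S_eq[OF \<open>K \<le> k\<close>] S_eq[OF \<open>K \<le> k + 1\<close>] q_power_less_1_iff[of "?n + 1"]
      by (simp add: numeral_2_eq_2 divide_right_mono mult_ac)
  qed
qed

lemma S_Suc_less_4: "K \<le> k \<Longrightarrow> S n (k + 1) < 4 * S n k"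
proof (cases n)
  case (Suc m)
  assume "K \<le> k"
  have "1 < 4 * ratio (m + 1) k"
    using ratio_lower[OF \<open>K \<le> k\<close>, of m] four_q_power_le_1[OF \<open>K \<le> k\<close>] by simp
  then have "S (m + 1) (k + 1) < S (m + 1) (k + 1) * (4 * ratio (m + 1) k)"
    using S_pos[of "k + 1" "m + 1"] \<open>K \<le> k\<close> by simp
  then show ?thesis
    using S_Suc_mult_ratio_le[of m] \<open>K \<le> k\<close> Suc by auto
qed (simp add: S_0)

end


section \<open>Oscillation and decay\<close>

context little_q_Legendre
begin

lemma lqL_grid_oscillation:
  assumes K: "q ^ (K + 1) \<le> 1 / 4" and "K \<le> k"
  shows "lqL_grid n (n + k) \<noteq> 0"
    and "\<bar>lqL_grid n (n + k + 1) / (lqL_grid n (n + k) * q ^ (k + 1))\<bar> < 4"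
    and "lqL_grid n (n + k + 1) / lqL_grid n (n + k) < 0"
    and "\<bar>lqL_grid n (n + k + 1)\<bar> \<le> 4 * q ^ (k + 1) * \<bar>lqL_grid n (n + k)\<bar>"
    and "\<bar>lqL_grid n (n + k + 1)\<bar> < \<bar>lqL_grid n (n + k)\<bar>"
proof -
  interpret scaled_recurrence q lqL_scaled K
    using K lqL_scaled_recurrence by unfold_locales simp_all
  define s where "s = ((-1) ^ k * q ^ tri k :: real)"
  define z where "z = q ^ (k + 1)"
  have grid: "lqL_grid n (n + k) = s * lqL_scaled n k"
             "lqL_grid n (n + k + 1) = - (s * z * lqL_scaled n (k + 1))"
    using lqL_grid_eq_scaled[of n k] lqL_grid_eq_scaled[of n "k + 1"] unfolding s_def z_def
    by (simp_all add: tri_Suc power_add)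
  have S: "0 < lqL_scaled n k" "0 < lqL_scaled n (k + 1)" "lqL_scaled n (k + 1) < 4 * lqL_scaled n k"
    using S_pos S_Suc_less_4 \<open>K \<le> k\<close> by simp_all
  have "s \<noteq> 0" "0 < z" "4 * z \<le> 1"
    unfolding s_def z_def using q_pos four_q_power_le_1[OF \<open>K \<le> k\<close>] by simp_all
  show "lqL_grid n (n + k) \<noteq> 0"
    using \<open>s \<noteq> 0\<close> S unfolding grid by simp
  show "\<bar>lqL_grid n (n + k + 1) / (lqL_grid n (n + k) * q ^ (k + 1))\<bar> < 4"
    using \<open>s \<noteq> 0\<close> \<open>0 < z\<close> S unfolding grid z_def[symmetric] by (simp add: abs_mult field_simps)
  show "lqL_grid n (n + k + 1) / lqL_grid n (n + k) < 0"
    using \<open>s \<noteq> 0\<close> \<open>0 < z\<close> S unfolding grid by (simp add: field_simps)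
  have "\<bar>lqL_grid n (n + k + 1)\<bar> = z * lqL_scaled n (k + 1) * \<bar>s\<bar>"
    using \<open>0 < z\<close> S unfolding grid by (simp add: abs_mult)
  moreover have "(4 * z) * lqL_scaled n k * \<bar>s\<bar> \<le> lqL_scaled n k * \<bar>s\<bar>"
    using mult_right_mono[OF \<open>4 * z \<le> 1\<close>, of "lqL_scaled n k * \<bar>s\<bar>"] S by (simp add: mult.assoc)
  moreover have "z * lqL_scaled n (k + 1) * \<bar>s\<bar> < (4 * z) * lqL_scaled n k * \<bar>s\<bar>"
    using \<open>0 < z\<close> \<open>s \<noteq> 0\<close> S by simp
  ultimately show "\<bar>lqL_grid n (n + k + 1)\<bar> \<le> 4 * q ^ (k + 1) * \<bar>lqL_grid n (n + k)\<bar>"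
    and "\<bar>lqL_grid n (n + k + 1)\<bar> < \<bar>lqL_grid n (n + k)\<bar>"
    unfolding grid(1) z_def[symmetric] using S by (simp_all add: abs_mult mult_ac)
qed

lemma lqL_grid_decay:
  assumes "q ^ (K + 1) \<le> 1 / 4"
  shows "\<bar>lqL_grid n (n + K + k)\<bar> \<le> 4 ^ k * q ^ ((2 * K + k + 1) * k div 2) * \<bar>lqL_grid n (n + K)\<bar>"
proof (induction k)
  case (Suc k)
  have "(2 * K + Suc k + 1) * Suc k div 2 = (2 * K + k + 1) * k div 2 + (K + k + 1)"
  proof -
    have "(2 * K + Suc k + 1) * Suc k = (2 * K + k + 1) * k + 2 * (K + k + 1)"
      by (simp add: algebra_simps)
    then show ?thesis
      by simp
  qed
  moreover have "\<bar>lqL_grid n (n + K + Suc k)\<bar> \<le> 4 * q ^ (K + k + 1) * \<bar>lqL_grid n (n + (K + k))\<bar>"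
    using lqL_grid_oscillation(4)[OF assms, of "K + k" n] by (simp add: add.assoc)
  moreover have "4 * q ^ (K + k + 1) * \<bar>lqL_grid n (n + (K + k))\<bar>
      \<le> 4 * q ^ (K + k + 1) * (4 ^ k * q ^ ((2 * K + k + 1) * k div 2) * \<bar>lqL_grid n (n + K)\<bar>)"
    using Suc.IH q_pos by (intro mult_left_mono) (auto simp: add.assoc)
  ultimately show ?case
    by (simp add: power_add algebra_simps)
qed simp

end

lemma ceiling_log_power_le:
  fixes q :: real
  assumes "0 < q" "q < 1"
  shows "q ^ (nat \<lceil>ln 4 / ln (1 / q) - 1\<rceil> + 1) \<le> 1 / 4"
proof -
  define K where "K = nat \<lceil>ln 4 / ln (1 / q) - 1\<rceil>"
  have "0 < ln (1 / q)"
    using assms by simp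
  moreover have "ln 4 / ln (1 / q) - 1 \<le> real K"
    unfolding K_def by (rule real_nat_ceiling_ge)
  ultimately have "ln 4 \<le> (real K + 1) * ln (1 / q)"
    by (simp add: field_simps)
  moreover have "ln (q ^ (K + 1)) = - ((real K + 1) * ln (1 / q))"
    using ln_realpow[of q "K + 1"] assms by (simp add: ln_div)
  ultimately have "ln (q ^ (K + 1)) \<le> ln (1 / 4)"
    by (simp add: ln_div)
  then show ?thesis
    unfolding K_def[symmetric] using assms by simp
qed

theorem lemma2p3:
  fixes q :: real
  assumes "0 < q" "q < 1"
  defines "\<alpha> \<equiv> \<lambda>x m. littleqLegendre q m x"
  defines "K \<equiv> nat \<lceil>ln 4 / ln (1 / q) - 1\<rceil>"
  shows "(\<forall>n k. K \<le> k \<longrightarrow>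
            \<alpha> (1 - q ^ n) (n + k) \<noteq> 0 \<and>
            \<bar>\<alpha> (1 - q ^ n) (n + k + 1) / (\<alpha> (1 - q ^ n) (n + k) * q ^ (k + 1))\<bar> < 4)
       \<and> (\<forall>n k. K \<le> k \<longrightarrow> \<alpha> (1 - q ^ n) (n + k + 1) / \<alpha> (1 - q ^ n) (n + k) < 0)
       \<and> (\<forall>n k. K \<le> k \<longrightarrow> \<bar>\<alpha> (1 - q ^ n) (n + k + 1)\<bar> < \<bar>\<alpha> (1 - q ^ n) (n + k)\<bar>)
       \<and> (\<forall>n k. \<bar>\<alpha> (1 - q ^ n) (n + K + k)\<bar>
                 \<le> 4 ^ k * q ^ ((2 * K + k + 1) * k div 2) * \<bar>\<alpha> (1 - q ^ n) (n + K)\<bar>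
              \<and> 4 ^ k * q ^ ((2 * K + k + 1) * k div 2) * \<bar>\<alpha> (1 - q ^ n) (n + K)\<bar>
                 \<le> 4 ^ k * q ^ ((2 * K + k + 1) * k div 2))"
proof -
  interpret little_q_Legendre q
    using assms(1,2) by unfold_locales
  have K: "q ^ (K + 1) \<le> 1 / 4"
    unfolding K_def using ceiling_log_power_le[OF assms(1,2)] .
  have "0 \<le> (4::real) ^ k * q ^ ((2 * K + k + 1) * k div 2)" for k
    using q_pos by simp
  then have "4 ^ k * q ^ ((2 * K + k + 1) * k div 2) * \<bar>lqL_grid n (n + K)\<bar>
      \<le> 4 ^ k * q ^ ((2 * K + k + 1) * k div 2)" for n k
    using lqL_grid_diagonal_abs_le_1[OF K, of n] by (simp add: mult_left_le)
  then show ?thesis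
    unfolding \<alpha>_def lqL_grid_def[symmetric]
    using lqL_grid_oscillation[OF K] lqL_grid_decay[OF K] by blast
qed

end
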